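(* Let $X$ be a vector lattice and let $l : X \to \mathbb{R}$ be a linear functional. Then $l$ is the sum of some pair of Riesz homomorphisms $X \to \mathbb{R}$ if and only if $l$ is positive and its kernel $\ker(l)$ is a Grothendieck subspace of $X$.
   Context: A Riesz homomorphism $X\to\mathbb{R}$ is a linear functional preserving finite lattice operations. A linear subspace $H$ of a vector lattice is called a Grothendieck subspace (or $G$-space) if for all $x, y \in H$ one has $x \vee y \vee 0 + x \wedge y \wedge 0 \in H$. *)

theory Defs
  imports "HOL-Analysis.Analysis"
begin

definition riesz_hom :: "('a::{ordered_real_vector, lattice} \<Rightarrow> real) \<Rightarrow> bool" where
  "riesz_hom f \<longleftrightarrow> linear f \<and>
     (\<forall>x y. f (sup x y) = max (f x) (f y)) \<and>
     (\<forall>x y. f (inf x y) = min (f x) (f y))"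

definition positive_functional :: "('a::{ordered_real_vector, lattice} \<Rightarrow> real) \<Rightarrow> bool" where
  "positive_functional f \<longleftrightarrow> (\<forall>x. 0 \<le> x \<longrightarrow> 0 \<le> f x)"

definition G_space :: "('a::{ordered_real_vector, lattice}) set \<Rightarrow> bool" where
  "G_space H \<longleftrightarrow> subspace H \<and>
     (\<forall>x\<in>H. \<forall>y\<in>H. sup (sup x y) 0 + inf (inf x y) 0 \<in> H)"

end

theory Submission
  imports Defs "HOL-Library.Lattice_Algebras"
begin

text \<open>
  A linear functional that is positive and preserves disjointness (\<open>l a = 0\<close> or \<open>l b = 0\<close>
  whenever \<open>a \<sqinter> b = 0\<close>) is a Riesz homomorphism.

  If \<open>l = f + g\<close> with Riesz homomorphisms \<open>f, g\<close>, then \<open>g = -f\<close> on \<open>ker l\<close>, and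
  \<open>(s, t) \<mapsto> max s t 0 + min s t 0\<close> is odd, so \<open>ker l\<close> is a Grothendieck subspace.

  Conversely, if \<open>ker l\<close> is a Grothendieck subspace, no three pairwise disjoint positive
  elements can all have positive value. So either \<open>l\<close> preserves disjointness, or there are
  disjoint \<open>u, v \<ge> 0\<close> with \<open>l u, l v > 0\<close>. In the latter case, for \<open>p \<ge> 0\<close> the value
  \<open>l (p \<sqinter> s v)\<close> no longer depends on \<open>s\<close> once \<open>s l v > l p\<close>. This defines the part \<open>g\<close> of \<open>l\<close>
  carried by the band of \<open>v\<close>, and again the three-element obstruction shows that both \<open>g\<close>
  and \<open>l - g\<close> preserve disjointness.
\<close>

text \<open>The sort \<open>{ordered_ab_group_add, lattice}\<close> has exactly the axioms of the class
  \<open>lattice_ab_group_add\<close>, so interpreting its class locale makes the lattice-ordered group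
  library available for the type variable of the theorem.\<close>

interpretation lgroup: lattice_ab_group_add "(+)" "0::'a::{ordered_ab_group_add, lattice}"
  "(-)" uminus "(\<le>)" "(<)" inf sup
  by unfold_locales

lemma pos_part_minus_neg_part: "sup x 0 - sup (- x) 0 = (x :: 'a::{ordered_ab_group_add, lattice})"
proof -
  have "sup x 0 - sup (- x) 0 = sup x 0 + inf x 0"
    using lgroup.inf_eq_neg_sup[of x 0] by simp
  also have "\<dots> = x"
    by (rule lgroup.add_eq_inf_sup[of x 0, unfolded add_0_right, symmetric])
  finally show ?thesis .
qed

lemma inf_pos_part_neg_part: "inf (sup x 0) (sup (- x) 0) = (0 :: 'a::{ordered_ab_group_add, lattice})"
proof -
  have "sup x 0 - x = sup x 0 - (sup x 0 - sup (- x) 0)"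
    by (simp only: pos_part_minus_neg_part)
  also have "\<dots> = sup (- x) 0" by simp
  finally have "inf (sup x 0) (sup (- x) 0) = inf (sup x 0 + 0) (sup x 0 + - x)" by simp
  also have "\<dots> = sup x 0 + inf 0 (- x)" by (rule lgroup.add_inf_distrib_left[symmetric])
  also have "\<dots> = sup x 0 - sup 0 x" using lgroup.inf_eq_neg_sup[of 0 "- x"] by simp
  finally show ?thesis by (simp add: sup_commute)
qed

lemma diff_inf_eq_pos_part: "a - inf a b = sup (a - b) (0 :: 'a::{ordered_ab_group_add, lattice})"
  by (simp add: lgroup.diff_inf_eq_sup lgroup.add_sup_distrib_left sup_commute)

lemma pos_part_diff_if_disjoint: "inf a b = 0 \<Longrightarrow> sup (a - b) 0 = (a :: 'a::{ordered_ab_group_add, lattice})"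
  using diff_inf_eq_pos_part[of a b] by simp

lemma sup_eq_add_if_disjoint: "inf a b = 0 \<Longrightarrow> sup a b = a + (b :: 'a::{ordered_ab_group_add, lattice})"
  using lgroup.add_eq_inf_sup[of a b] by simp

lemma inf_add_le_add_inf:
  fixes a b c :: "'a::{ordered_ab_group_add, lattice}"
  assumes "0 \<le> a" "0 \<le> b" "0 \<le> c"
  shows "inf (a + b) c \<le> inf a c + inf b c"
proof -
  have "inf a c + inf b c = inf (inf (a + b) (c + b)) (inf (a + c) (c + c))"
    by (simp add: lgroup.add_inf_distrib_left lgroup.add_inf_distrib_right)
  moreover have "inf (a + b) c \<le> c + b" "inf (a + b) c \<le> a + c" "inf (a + b) c \<le> c + c"
    using assms by (meson add_increasing add_increasing2 inf_le2 order.trans)+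
  ultimately show ?thesis by simp
qed

lemma nonneg_if_disjoint:
  fixes a b :: "'a::{zero, lattice}"
  assumes "inf a b = 0"
  shows "0 \<le> a" "0 \<le> b"
  using inf_le1[of a b] inf_le2[of a b] assms by simp_all

lemma scaleR_inf_distrib:
  fixes a b :: "'a::{ordered_real_vector, lattice}"
  assumes "0 \<le> c"
  shows "c *\<^sub>R inf a b = inf (c *\<^sub>R a) (c *\<^sub>R b)"
proof (cases "c = 0")
  case False
  with assms have c: "0 < c" by simp
  show ?thesis
  proof (rule order.antisym)
    show "c *\<^sub>R inf a b \<le> inf (c *\<^sub>R a) (c *\<^sub>R b)"
      using assms by (simp add: scaleR_left_mono)
    have "inverse c *\<^sub>R inf (c *\<^sub>R a) (c *\<^sub>R b) \<le> inverse c *\<^sub>R (c *\<^sub>R a)"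
      and "inverse c *\<^sub>R inf (c *\<^sub>R a) (c *\<^sub>R b) \<le> inverse c *\<^sub>R (c *\<^sub>R b)"
      using c by (intro scaleR_left_mono; simp)+
    with c have "inverse c *\<^sub>R inf (c *\<^sub>R a) (c *\<^sub>R b) \<le> inf a b" by simp
    then have "c *\<^sub>R (inverse c *\<^sub>R inf (c *\<^sub>R a) (c *\<^sub>R b)) \<le> c *\<^sub>R inf a b"
      using c by (intro scaleR_left_mono) auto
    with c show "inf (c *\<^sub>R a) (c *\<^sub>R b) \<le> c *\<^sub>R inf a b" by simp
  qed
qed simp

lemma disjoint_scaleR:
  fixes p q :: "'a::{ordered_real_vector, lattice}"
  assumes "0 \<le> \<alpha>" "0 \<le> \<beta>" "inf p q = 0"
  shows "inf (\<alpha> *\<^sub>R p) (\<beta> *\<^sub>R q) = 0"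
proof (rule order.antisym)
  note pq = nonneg_if_disjoint[OF assms(3)]
  then have "inf (\<alpha> *\<^sub>R p) (\<beta> *\<^sub>R q) \<le> inf ((\<alpha> + \<beta>) *\<^sub>R p) ((\<alpha> + \<beta>) *\<^sub>R q)"
    using assms by (intro inf_mono scaleR_right_mono) auto
  also have "\<dots> = 0"
    using assms scaleR_inf_distrib[of "\<alpha> + \<beta>" p q] by simp
  finally show "inf (\<alpha> *\<^sub>R p) (\<beta> *\<^sub>R q) \<le> 0" .
  show "0 \<le> inf (\<alpha> *\<^sub>R p) (\<beta> *\<^sub>R q)"
    using assms pq by (simp add: scaleR_nonneg_nonneg)
qed

lemma disjoint_mono:
  fixes x y z :: "'a::{zero, lattice}"
  assumes "0 \<le> x" "x \<le> y" "inf z y = 0"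
  shows "inf z x = 0"
proof (rule order.antisym)
  have "inf z x \<le> inf z y" using assms(2) by (rule inf_mono[OF order.refl])
  with assms(3) show "inf z x \<le> 0" by simp
  show "0 \<le> inf z x" using nonneg_if_disjoint(1)[OF assms(3)] assms(1) by (rule le_infI)
qed

definition disjointness_preserving :: "('a::{ordered_real_vector, lattice} \<Rightarrow> real) \<Rightarrow> bool" where
  "disjointness_preserving h \<longleftrightarrow> (\<forall>a b. inf a b = 0 \<longrightarrow> h a = 0 \<or> h b = 0)"

lemma positive_functional_mono:
  assumes "linear h" "positive_functional h" "a \<le> b"
  shows "h a \<le> h b"
proof -
  have "0 \<le> h (b - a)" using assms(2,3) unfolding positive_functional_def by simp
  with linear_diff[OF assms(1)] show ?thesis by simp
qed

lemma riesz_homI: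
  fixes h :: "'a::{ordered_real_vector, lattice} \<Rightarrow> real"
  assumes lin: "linear h" and pos: "positive_functional h" and dis: "disjointness_preserving h"
  shows "riesz_hom h"
proof -
  have pos_part: "h (sup w 0) = max (h w) 0" for w
  proof -
    have "h (sup w 0) = 0 \<or> h (sup (- w) 0) = 0"
      using dis inf_pos_part_neg_part unfolding disjointness_preserving_def by blast
    moreover have "0 \<le> h (sup w 0)" "0 \<le> h (sup (- w) 0)"
      using pos unfolding positive_functional_def by simp_all
    moreover have "h w = h (sup w 0) - h (sup (- w) 0)"
      using linear_diff[OF lin] pos_part_minus_neg_part by metis
    ultimately show ?thesis by linarith
  qed
  have sup: "h (sup x y) = max (h x) (h y)" for x y
  proof -
    have "sup x y = sup (x - y) 0 + y"
      using lgroup.add_sup_distrib_right[of "x - y" 0 y] by simp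
    then show ?thesis
      using pos_part[of "x - y"] linear_add[OF lin] linear_diff[OF lin] by simp
  qed
  have "h (inf x y) = min (h x) (h y)" for x y
  proof -
    have "inf x y = x + y - sup x y"
      unfolding lgroup.add_eq_inf_sup[of x y] by (rule add_diff_cancel_left'[symmetric])
    then have "h (inf x y) = h x + h y - h (sup x y)"
      by (simp only: linear_diff[OF lin] linear_add[OF lin])
    with sup[of x y] show ?thesis by simp
  qed
  with lin sup show ?thesis unfolding riesz_hom_def by blast
qed

lemma riesz_hom_positive:
  assumes "riesz_hom f"
  shows "positive_functional f"
  unfolding positive_functional_def
proof (intro allI impI)
  fix x :: 'a assume "0 \<le> x"
  then have "f x = max (f x) (f 0)"
    using assms sup_absorb1[of 0 x] unfolding riesz_hom_def by metis
  with assms show "0 \<le> f x" unfolding riesz_hom_def by (simp add: linear_0)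
qed

lemma riesz_hom_zero: "riesz_hom (\<lambda>x. 0)"
  unfolding riesz_hom_def by (simp add: linear_zero)

lemma positive_functional_add:
  "positive_functional f \<Longrightarrow> positive_functional g \<Longrightarrow> positive_functional (\<lambda>x. f x + g x)"
  unfolding positive_functional_def by (simp add: add_nonneg_nonneg)

lemma G_space_kernel_riesz_hom_add:
  assumes f: "riesz_hom f" and g: "riesz_hom g"
  shows "G_space {x. f x + g x = 0}"
  unfolding G_space_def
proof (intro conjI ballI)
  show "subspace {x. f x + g x = 0}"
    using f g unfolding riesz_hom_def by (intro linear_subspace_kernel linear_compose_add) auto
  define \<phi> :: "real \<Rightarrow> real \<Rightarrow> real" where "\<phi> s t = max (max s t) 0 + min (min s t) 0" for s t
  have \<phi>_odd: "\<phi> (- s) (- t) = - \<phi> s t" for s t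
    unfolding \<phi>_def by (simp add: max_def min_def)
  have \<phi>_hom: "h (sup (sup x y) 0 + inf (inf x y) 0) = \<phi> (h x) (h y)"
    if "riesz_hom h" for h :: "'a \<Rightarrow> real" and x y
    using that unfolding riesz_hom_def \<phi>_def by (simp add: linear_add linear_0)
  fix x y assume "x \<in> {x. f x + g x = 0}" "y \<in> {x. f x + g x = 0}"
  then have "g x = - f x" "g y = - f y" by simp_all
  then show "sup (sup x y) 0 + inf (inf x y) 0 \<in> {x. f x + g x = 0}"
    using \<phi>_hom[OF f] \<phi>_hom[OF g] \<phi>_odd by simp
qed

locale G_kernel_functional =
  fixes l :: "'a::{ordered_real_vector, lattice} \<Rightarrow> real"
  assumes linear: "linear l" and positive: "positive_functional l"
    and G_kernel: "G_space {x. l x = 0}"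
begin

lemma mono: "a \<le> b \<Longrightarrow> l a \<le> l b"
  by (rule positive_functional_mono[OF linear positive])

lemma nonneg: "0 \<le> a \<Longrightarrow> 0 \<le> l a"
  using positive unfolding positive_functional_def by simp

lemma no_three_disjoint:
  assumes pq: "inf p q = 0" and qr: "inf q r = 0" and pr: "inf p r = 0"
    and lp: "0 < l p" and lq: "0 < l q"
  shows "l r = 0"
proof (rule ccontr)
  assume "l r \<noteq> 0"
  have p: "0 \<le> p" and q: "0 \<le> q" and r: "0 \<le> r"
    using nonneg_if_disjoint pq qr by blast+
  with nonneg[OF r] \<open>l r \<noteq> 0\<close> have lr: "0 < l r" by simp
  \<comment> \<open>\<open>x\<close> and \<open>y\<close> lie in the kernel, but the positive part of their G-combination is
    \<open>l q (p + r)\<close> while its negative part is at least \<open>-max (l p) (l r) q\<close>.\<close>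
  define x where "x = l q *\<^sub>R p - l p *\<^sub>R q"
  define y where "y = l q *\<^sub>R r - l r *\<^sub>R q"
  have "l x = 0" "l y = 0"
    unfolding x_def y_def by (simp_all add: linear_diff[OF linear] linear_scale[OF linear])
  then have "sup (sup x y) 0 + inf (inf x y) 0 \<in> {x. l x = 0}"
    using G_kernel unfolding G_space_def by blast
  then have kernel: "l (sup (sup x y) 0) + l (inf (inf x y) 0) = 0"
    by (simp add: linear_add[OF linear])
  have x_pos: "sup x 0 = l q *\<^sub>R p"
    unfolding x_def using disjoint_scaleR[OF _ _ pq] lp lq by (simp add: pos_part_diff_if_disjoint)
  have y_pos: "sup y 0 = l q *\<^sub>R r"
    unfolding y_def using disjoint_scaleR[of "l q" "l r" r q] qr lq lr
    by (simp add: pos_part_diff_if_disjoint inf_commute)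
  have "inf (l q *\<^sub>R p) (l q *\<^sub>R r) = 0"
    using disjoint_scaleR[OF _ _ pr] lq by simp
  then have "sup (sup x 0) (sup y 0) = l q *\<^sub>R p + l q *\<^sub>R r"
    unfolding x_pos y_pos by (rule sup_eq_add_if_disjoint)
  moreover have "sup (sup x y) 0 = sup (sup x 0) (sup y 0)" by (simp add: sup_aci)
  ultimately have "sup (sup x y) 0 = l q *\<^sub>R p + l q *\<^sub>R r" by simp
  then have pos_part: "l (sup (sup x y) 0) = l q * l p + l q * l r"
    by (simp add: linear_add[OF linear] linear_scale[OF linear])
  define m where "m = max (l p) (l r)"
  have "0 - m *\<^sub>R q \<le> x" "0 - m *\<^sub>R q \<le> y"
    unfolding x_def y_def m_def using p q r lq
    by (intro diff_mono scaleR_right_mono scaleR_nonneg_nonneg; simp)+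
  moreover have "- (m *\<^sub>R q) \<le> 0"
    using q lp unfolding m_def by (simp add: scaleR_nonneg_nonneg)
  ultimately have "- (m *\<^sub>R q) \<le> inf (inf x y) 0" by simp
  then have "l (- (m *\<^sub>R q)) \<le> l (inf (inf x y) 0)" by (rule mono)
  then have "- (m * l q) \<le> l (inf (inf x y) 0)"
    by (simp add: linear_neg[OF linear] linear_scale[OF linear])
  moreover have "m * l q < l q * l p + l q * l r"
    unfolding m_def using lp lq lr by (simp add: max_def algebra_simps)
  ultimately show False using kernel pos_part by linarith
qed

end

locale G_kernel_disjoint_pair = G_kernel_functional +
  fixes u v :: "'a::{ordered_real_vector, lattice}"
  assumes disjoint_uv: "inf u v = 0" and lu: "0 < l u" and lv: "0 < l v"
begin

lemma scaleR_v_nonneg: "0 \<le> s \<Longrightarrow> 0 \<le> s *\<^sub>R v"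
  using nonneg_if_disjoint(2)[OF disjoint_uv] by (simp add: scaleR_nonneg_nonneg)

lemma disjoint_u_scaleR_v: "0 \<le> s \<Longrightarrow> inf u (s *\<^sub>R v) = 0"
  using disjoint_scaleR[of 1 s u v] disjoint_uv by simp

lemma truncation_stable:
  assumes p: "0 \<le> p" and t: "l p < t * l v" and ts: "t \<le> s"
  shows "l (inf p (s *\<^sub>R v)) = l (inf p (t *\<^sub>R v))"
proof -
  have "0 < t * l v" using t nonneg[OF p] by linarith
  with lv have t0: "0 \<le> t" by (simp add: zero_less_mult_iff)
  with ts have s0: "0 \<le> s" by simp
  \<comment> \<open>\<open>d = (a - t v)\<^sup>+\<close> and \<open>w = (t v - a)\<^sup>+\<close> are disjoint, both are disjoint
    from \<open>u\<close>, and \<open>l w > 0\<close>.\<close>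
  define a where "a = inf p (s *\<^sub>R v)"
  define d where "d = sup (a - t *\<^sub>R v) 0"
  define w where "w = sup (- (a - t *\<^sub>R v)) 0"
  have a0: "0 \<le> a" unfolding a_def using p scaleR_v_nonneg[OF s0] by simp
  have "t *\<^sub>R v \<le> s *\<^sub>R v"
    using ts scaleR_v_nonneg[of 1] by (intro scaleR_right_mono) auto
  then have a_trunc: "inf a (t *\<^sub>R v) = inf p (t *\<^sub>R v)"
    unfolding a_def by (simp add: inf_assoc inf_absorb2)
  have d: "d = a - inf a (t *\<^sub>R v)"
    unfolding d_def by (rule diff_inf_eq_pos_part[symmetric])
  have dw: "inf w d = 0"
    unfolding d_def w_def by (subst inf_commute) (rule inf_pos_part_neg_part)
  have "0 \<le> inf a (t *\<^sub>R v)" using a0 scaleR_v_nonneg[OF t0] by simp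
  then have "d \<le> a" unfolding d diff_le_eq by (rule add_increasing2) simp
  then have "d \<le> s *\<^sub>R v" unfolding a_def by (simp add: le_infI2)
  then have ud: "inf u d = 0"
    by (rule disjoint_mono[OF _ _ disjoint_u_scaleR_v[OF s0], rotated]) (simp add: d_def)
  have "w \<le> t *\<^sub>R v"
    unfolding w_def using a0 scaleR_v_nonneg[OF t0] by simp
  then have uw: "inf u w = 0"
    by (rule disjoint_mono[OF _ _ disjoint_u_scaleR_v[OF t0], rotated]) (simp add: w_def)
  have "l (t *\<^sub>R v - a) \<le> l w"
    unfolding w_def by (rule mono) simp
  moreover have "l a \<le> l p" unfolding a_def by (rule mono) simp
  ultimately have "0 < l w"
    using t by (simp add: linear_diff[OF linear] linear_scale[OF linear])
  then have "l d = 0"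
    using no_three_disjoint[OF uw dw ud lu] by simp
  then have "l a - l (inf p (t *\<^sub>R v)) = 0"
    unfolding d a_trunc by (simp only: linear_diff[OF linear])
  then show ?thesis unfolding a_def by simp
qed

text \<open>By \<open>truncation_stable\<close>, \<open>band_part p\<close> is the eventual value of \<open>l (p \<sqinter> s v)\<close>
  as \<open>s \<rightarrow> \<infinity>\<close>: \<open>l\<close> applied to the component of \<open>p\<close> in the band generated by \<open>v\<close>, a band
  projection that need not exist in a general vector lattice.\<close>

definition band_part :: "'a \<Rightarrow> real" where
  "band_part p = l (inf p ((l p / l v + 1) *\<^sub>R v))"

lemma band_part_eq:
  assumes p: "0 \<le> p" and s: "l p < s * l v"
  shows "band_part p = l (inf p (s *\<^sub>R v))"
proof -
  have t: "l p < (l p / l v + 1) * l v" using lv by (simp add: field_simps)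
  define m where "m = max s (l p / l v + 1)"
  have "l (inf p (m *\<^sub>R v)) = l (inf p (s *\<^sub>R v))"
    by (rule truncation_stable[OF p s]) (simp add: m_def)
  moreover have "l (inf p (m *\<^sub>R v)) = band_part p"
    unfolding band_part_def by (rule truncation_stable[OF p t]) (simp add: m_def)
  ultimately show ?thesis by simp
qed

lemma common_truncation:
  assumes a: "0 \<le> a" and b: "0 \<le> b"
  obtains s where "0 \<le> s" "l a + l b < s * l v"
    "band_part a = l (inf a (s *\<^sub>R v))" "band_part b = l (inf b (s *\<^sub>R v))"
proof
  let ?s = "(l a + l b) / l v + 1"
  show "0 \<le> ?s" using nonneg[OF a] nonneg[OF b] lv by simp
  show s: "l a + l b < ?s * l v" using lv by (simp add: field_simps)
  show "band_part a = l (inf a (?s *\<^sub>R v))"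
    using s nonneg[OF b] by (intro band_part_eq[OF a]) linarith
  show "band_part b = l (inf b (?s *\<^sub>R v))"
    using s nonneg[OF a] by (intro band_part_eq[OF b]) linarith
qed

lemma band_part_zero: "band_part 0 = 0"
proof -
  have "band_part 0 = l (inf 0 (1 *\<^sub>R v))"
    using lv by (intro band_part_eq) (simp_all add: linear_0[OF linear])
  also have "inf 0 (1 *\<^sub>R v) = 0"
    using scaleR_v_nonneg[of 1] by (simp add: inf_absorb1)
  finally show ?thesis by (simp add: linear_0[OF linear])
qed

lemma band_part_nonneg: "0 \<le> p \<Longrightarrow> 0 \<le> band_part p"
proof -
  assume p: "0 \<le> p"
  have "0 \<le> l p / l v + 1" using nonneg[OF p] lv by simp
  with p show ?thesis unfolding band_part_def by (intro nonneg le_infI scaleR_v_nonneg)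
qed

lemma band_part_le: "band_part p \<le> l p"
  unfolding band_part_def by (rule mono) simp

lemma band_part_add:
  assumes p: "0 \<le> p" and q: "0 \<le> q"
  shows "band_part (p + q) = band_part p + band_part q"
proof -
  obtain s where s0: "0 \<le> s" and s: "l p + l q < s * l v"
    and bp: "band_part p = l (inf p (s *\<^sub>R v))" and bq: "band_part q = l (inf q (s *\<^sub>R v))"
    using common_truncation[OF p q] .
  have pq: "0 \<le> p + q" using p q by simp
  have "0 \<le> s * l v" using s0 lv by simp
  with s have lpq: "l (p + q) < s * l v" "l (p + q) < (2 * s) * l v"
    by (simp_all add: linear_add[OF linear] mult.assoc)
  have sum: "l (inf p (s *\<^sub>R v) + inf q (s *\<^sub>R v)) = band_part p + band_part q"
    using bp bq by (simp add: linear_add[OF linear])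
  have "band_part (p + q) = l (inf (p + q) (s *\<^sub>R v))"
    by (rule band_part_eq[OF pq lpq(1)])
  also have "\<dots> \<le> band_part p + band_part q"
    unfolding sum[symmetric] by (rule mono[OF inf_add_le_add_inf[OF p q scaleR_v_nonneg[OF s0]]])
  finally have le: "band_part (p + q) \<le> band_part p + band_part q" .
  have "inf p (s *\<^sub>R v) + inf q (s *\<^sub>R v) \<le> p + q"
    by (intro add_mono inf_le1)
  moreover have "inf p (s *\<^sub>R v) + inf q (s *\<^sub>R v) \<le> s *\<^sub>R v + s *\<^sub>R v"
    by (intro add_mono inf_le2)
  then have "inf p (s *\<^sub>R v) + inf q (s *\<^sub>R v) \<le> (2 * s) *\<^sub>R v"
    by (simp only: mult_2 scaleR_add_left)
  ultimately have "band_part p + band_part q \<le> l (inf (p + q) ((2 * s) *\<^sub>R v))"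
    unfolding sum[symmetric] by (intro mono le_infI)
  also have "\<dots> = band_part (p + q)"
    by (rule band_part_eq[OF pq lpq(2), symmetric])
  finally show ?thesis using le by simp
qed

lemma band_part_scaleR:
  assumes p: "0 \<le> p" and c: "0 \<le> c"
  shows "band_part (c *\<^sub>R p) = c * band_part p"
proof (cases "c = 0")
  case True
  then show ?thesis by (simp add: band_part_zero)
next
  case False
  with c have c: "0 < c" by simp
  define s where "s = l p / l v + 1"
  have "l p < s * l v" unfolding s_def using lv by (simp add: field_simps)
  with c have "l (c *\<^sub>R p) < (c * s) * l v" by (simp add: linear_scale[OF linear])
  then have "band_part (c *\<^sub>R p) = l (inf (c *\<^sub>R p) (c *\<^sub>R (s *\<^sub>R v)))"
    using band_part_eq[of "c *\<^sub>R p" "c * s"] p c by (simp add: scaleR_nonneg_nonneg)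
  also have "inf (c *\<^sub>R p) (c *\<^sub>R (s *\<^sub>R v)) = c *\<^sub>R inf p (s *\<^sub>R v)"
    using c by (simp only: scaleR_inf_distrib less_imp_le)
  also have "l \<dots> = c * band_part p"
    unfolding band_part_def s_def by (simp add: linear_scale[OF linear])
  finally show ?thesis .
qed

definition band_functional :: "'a \<Rightarrow> real" where
  "band_functional z = band_part (sup z 0) - band_part (sup (- z) 0)"

lemma band_functional_diff:
  assumes a: "0 \<le> a" and b: "0 \<le> b"
  shows "band_functional (a - b) = band_part a - band_part b"
proof -
  define P N where "P = sup (a - b) 0" and "N = sup (- (a - b)) 0"
  have "P - N = a - b" unfolding P_def N_def by (rule pos_part_minus_neg_part)
  then have "P + b = a + N" by (simp add: algebra_simps)
  moreover have "0 \<le> P" "0 \<le> N" unfolding P_def N_def by simp_all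
  ultimately have "band_part P + band_part b = band_part a + band_part N"
    using a b by (metis band_part_add)
  then show ?thesis unfolding band_functional_def P_def N_def by simp
qed

lemma band_functional_nonneg: "0 \<le> p \<Longrightarrow> band_functional p = band_part p"
  using band_functional_diff[of p 0] by (simp add: band_part_zero)

lemma band_functional_uminus: "band_functional (- z) = - band_functional z"
  unfolding band_functional_def by simp

lemma linear_band_functional: "linear band_functional"
proof (rule linearI)
  fix x y :: 'a
  define xp xn yp yn where "xp = sup x 0" and "xn = sup (- x) 0" and "yp = sup y 0" and "yn = sup (- y) 0"
  have nonneg_parts: "0 \<le> xp" "0 \<le> xn" "0 \<le> yp" "0 \<le> yn"
    unfolding xp_def xn_def yp_def yn_def by simp_all
  have "xp - xn = x" "yp - yn = y"
    unfolding xp_def xn_def yp_def yn_def by (rule pos_part_minus_neg_part)+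
  then have "x + y = (xp + yp) - (xn + yn)" by (simp add: algebra_simps)
  then have "band_functional (x + y) = band_part (xp + yp) - band_part (xn + yn)"
    using nonneg_parts by (simp add: band_functional_diff)
  then show "band_functional (x + y) = band_functional x + band_functional y"
    using nonneg_parts unfolding band_functional_def xp_def xn_def yp_def yn_def
    by (simp add: band_part_add)
next
  have nonneg_scale: "band_functional (c *\<^sub>R x) = c * band_functional x" if c: "0 \<le> c" for c x
  proof -
    have "c *\<^sub>R x = c *\<^sub>R sup x 0 - c *\<^sub>R sup (- x) 0"
      using pos_part_minus_neg_part[of x] by (metis scaleR_right_diff_distrib)
    then have "band_functional (c *\<^sub>R x) = band_part (c *\<^sub>R sup x 0) - band_part (c *\<^sub>R sup (- x) 0)"
      using c by (simp add: band_functional_diff scaleR_nonneg_nonneg)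
    with c show ?thesis
      by (simp add: band_part_scaleR band_functional_def right_diff_distrib)
  qed
  fix c :: real and x :: 'a
  show "band_functional (c *\<^sub>R x) = c *\<^sub>R band_functional x"
  proof (cases "0 \<le> c")
    case False
    then have "band_functional (c *\<^sub>R x) = - band_functional ((- c) *\<^sub>R x)"
      using band_functional_uminus[of "(- c) *\<^sub>R x"] by simp
    with False show ?thesis using nonneg_scale[of "- c" x] by simp
  qed (simp add: nonneg_scale)
qed

lemma disjointness_preserving_band_functional: "disjointness_preserving band_functional"
  unfolding disjointness_preserving_def
proof (intro allI impI)
  fix a b :: 'a
  assume ab: "inf a b = 0"
  note a = nonneg_if_disjoint(1)[OF ab] and b = nonneg_if_disjoint(2)[OF ab]
  obtain s where s0: "0 \<le> s"
    and ta: "band_part a = l (inf a (s *\<^sub>R v))" and tb: "band_part b = l (inf b (s *\<^sub>R v))"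
    using common_truncation[OF a b] by blast
  define a' where "a' = inf a (s *\<^sub>R v)"
  define b' where "b' = inf b (s *\<^sub>R v)"
  have a'0: "0 \<le> a'" and b'0: "0 \<le> b'"
    unfolding a'_def b'_def using a b scaleR_v_nonneg[OF s0] by simp_all
  have "inf a' b = 0"
    using disjoint_mono[of a' a b] a'0 ab unfolding a'_def by (simp add: inf_commute)
  then have "inf a' b' = 0"
    using disjoint_mono[of b' b a'] b'0 unfolding b'_def by simp
  moreover have "inf a' u = 0" "inf b' u = 0"
    using disjoint_mono[OF a'0 _ disjoint_u_scaleR_v[OF s0]]
      disjoint_mono[OF b'0 _ disjoint_u_scaleR_v[OF s0]]
    unfolding a'_def b'_def by (simp_all add: inf_commute)
  ultimately have "\<not> (0 < l a' \<and> 0 < l b')"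
    using no_three_disjoint[of a' b' u] lu by auto
  then show "band_functional a = 0 \<or> band_functional b = 0"
    using nonneg[OF a'0] nonneg[OF b'0] ta tb a b
    unfolding a'_def b'_def by (auto simp: band_functional_nonneg)
qed

lemma riesz_hom_band_functional: "riesz_hom band_functional"
proof (rule riesz_homI[OF linear_band_functional _ disjointness_preserving_band_functional])
  show "positive_functional band_functional"
    unfolding positive_functional_def by (simp add: band_functional_nonneg band_part_nonneg)
qed

lemma disjointness_preserving_diff_band_functional:
  "disjointness_preserving (\<lambda>z. l z - band_functional z)"
  unfolding disjointness_preserving_def
proof (intro allI impI)
  fix a b :: 'a
  assume ab: "inf a b = 0"
  note a = nonneg_if_disjoint(1)[OF ab] and b = nonneg_if_disjoint(2)[OF ab]
  obtain s where s0: "0 \<le> s" and s: "l a + l b < s * l v"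
    and ta: "band_part a = l (inf a (s *\<^sub>R v))" and tb: "band_part b = l (inf b (s *\<^sub>R v))"
    using common_truncation[OF a b] by blast
  define a' where "a' = sup (a - s *\<^sub>R v) 0"
  define b' where "b' = sup (b - s *\<^sub>R v) 0"
  define w where "w = sup (s *\<^sub>R v - a - b) 0"
  have nonneg_parts: "0 \<le> a'" "0 \<le> b'" "0 \<le> w"
    unfolding a'_def b'_def w_def by simp_all
  have "a' = a - inf a (s *\<^sub>R v)" "b' = b - inf b (s *\<^sub>R v)"
    unfolding a'_def b'_def by (rule diff_inf_eq_pos_part[symmetric])+
  then have la': "l a' = l a - band_part a" and lb': "l b' = l b - band_part b"
    unfolding ta tb by (simp_all only: linear_diff[OF linear])
  have "l (s *\<^sub>R v - a - b) \<le> l w" unfolding w_def by (rule mono) simp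
  with s have lw: "0 < l w"
    by (simp add: linear_diff[OF linear] linear_scale[OF linear])
  have "a' \<le> a" "b' \<le> b"
    unfolding a'_def b'_def using a b scaleR_v_nonneg[OF s0] by simp_all
  then have "inf a' b' = 0"
    using disjoint_mono[of b' b a'] disjoint_mono[of a' a b] nonneg_parts ab
    by (simp add: inf_commute)
  have le_a: "s *\<^sub>R v - a - b \<le> s *\<^sub>R v - a" and le_b: "s *\<^sub>R v - a - b \<le> s *\<^sub>R v - b"
    using a b by (simp_all add: diff_le_eq)
  have "w \<le> sup (- (a - s *\<^sub>R v)) 0" "w \<le> sup (- (b - s *\<^sub>R v)) 0"
    unfolding w_def minus_diff_eq
    by (rule sup_mono[OF le_a order.refl], rule sup_mono[OF le_b order.refl])
  then have "inf a' w = 0" "inf b' w = 0"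
    using disjoint_mono[OF nonneg_parts(3)] inf_pos_part_neg_part
    unfolding a'_def b'_def by blast+
  with \<open>inf a' b' = 0\<close> have "\<not> (0 < l a' \<and> 0 < l b')"
    using no_three_disjoint[of a' b' w] lw by auto
  then show "l a - band_functional a = 0 \<or> l b - band_functional b = 0"
    using nonneg[of a'] nonneg[of b'] nonneg_parts la' lb' a b
    by (auto simp: band_functional_nonneg)
qed

lemma riesz_hom_diff_band_functional: "riesz_hom (\<lambda>z. l z - band_functional z)"
proof (rule riesz_homI[OF _ _ disjointness_preserving_diff_band_functional])
  show "linear (\<lambda>z. l z - band_functional z)"
    by (rule linear_compose_sub[OF linear linear_band_functional])
  show "positive_functional (\<lambda>z. l z - band_functional z)"
    unfolding positive_functional_def by (simp add: band_functional_nonneg band_part_le)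
qed

end

context G_kernel_functional
begin

lemma riesz_hom_sum_decomposition:
  "\<exists>f g. riesz_hom f \<and> riesz_hom g \<and> l = (\<lambda>x. f x + g x)"
proof (cases "disjointness_preserving l")
  case True
  then have "riesz_hom l" by (rule riesz_homI[OF linear positive])
  with riesz_hom_zero show ?thesis by fastforce
next
  case False
  then obtain u v where uv: "inf u v = 0" and "l u \<noteq> 0" "l v \<noteq> 0"
    unfolding disjointness_preserving_def by blast
  with nonneg_if_disjoint[OF uv] nonneg have "0 < l u" "0 < l v"
    by (simp_all add: order_less_le)
  with uv interpret G_kernel_disjoint_pair l u v by unfold_locales
  show ?thesis
    using riesz_hom_diff_band_functional riesz_hom_band_functional by fastforce
qed

end

theorem lemma1:
  fixes l :: "'a::{ordered_real_vector, lattice} \<Rightarrow> real"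
  assumes "linear l"
  shows "(\<exists>f g. riesz_hom f \<and> riesz_hom g \<and> l = (\<lambda>x. f x + g x)) \<longleftrightarrow>
         positive_functional l \<and> G_space {x. l x = 0}"
proof
  assume "\<exists>f g. riesz_hom f \<and> riesz_hom g \<and> l = (\<lambda>x. f x + g x)"
  then obtain f g where f: "riesz_hom f" and g: "riesz_hom g" and l: "l = (\<lambda>x. f x + g x)"
    by blast
  show "positive_functional l \<and> G_space {x. l x = 0}"
    unfolding l using positive_functional_add[OF riesz_hom_positive[OF f] riesz_hom_positive[OF g]]
      G_space_kernel_riesz_hom_add[OF f g] by simp
next
  assume "positive_functional l \<and> G_space {x. l x = 0}"
  with assms interpret G_kernel_functional l by (simp add: G_kernel_functional_def)
  show "\<exists>f g. riesz_hom f \<and> riesz_hom g \<and> l = (\<lambda>x. f x + g x)"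
    by (rule riesz_hom_sum_decomposition)
qed

end
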